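(* Let $m\ge3$ and $h\ge1$ be integers and set $n'=2^{2m+h-3}-2^{2m-3}-2^{m-1}$. Let $\mathbf{C}_0$ be a projective binary linear $[2^{2m-3}+2^{m-2}-1,\ 2m-2]$ code whose set of nonzero weights is $\{2^{2m-4},\,2^{2m-4}+2^{m-2}\}$, and let $\mathbf{C}_1$ be its simplex complementary code of dimension $2m+h-2$, a $[2^{2m+h-2}-2^{2m-3}-2^{m-2},\ 2m+h-2,\ 2^{2m+h-3}-2^{2m-4}-2^{m-2}]_2$ code with maximum weight $2^{2m+h-3}$. Then the code $\mathbf{C}'$ obtained from $\mathbf{C}_1$ by the extension construction is a minimal binary linear $[2^{2m+h-2}-2^{2m-3}-2^{m-2}+n',\ 2m+h-2,\ 2^{2m+h-3}-2^{2m-4}-2^{m-2}]_2$ code with maximum weight $2^{2m+h-2}-2^{2m-3}-2^{m-1}$, and it violates the Ashikhmin–Barg condition.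
   Context: Projective code: columns of a generator matrix are nonzero and pairwise distinct (binary case). Simplex complementary code of dimension $K=k+h$ of a projective binary $[n,k]$ code: append $h$ zeros to the columns of a generator matrix and take the code generated by the matrix whose columns are all nonzero vectors of $\mathbf{F}_2^K$ other than these $n$. Extension construction for a binary $[N,K]$ code $\mathbf{D}$, $K\ge2$, with minimum nonzero weight $w_{min}$, maximum weight $w_{max}$ and $n'=2w_{min}-w_{max}\ge1$: choose a basis $\mathbf{r}_1,\dots,\mathbf{r}_K$ with $wt(\mathbf{r}_1)=w_{max}$, $wt(\mathbf{r}_2)=w_{min}$; the extended code is generated by $(\mathbf{1},\mathbf{r}_1),(\mathbf{0},\mathbf{r}_2),\dots,(\mathbf{0},\mathbf{r}_K)$ in $\mathbf{F}_2^{n'+N}$. Minimal code: nonzero codewords with nested supports are equal. Ashikhmin–Barg condition (binary): $w_{min}/w_{max}>1/2$. *)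

theory Defs
  imports Main "HOL-Library.Extended_Real" Complex_Main
begin

text \<open>Binary vectors of length n are boolean lists of length n (True = 1).\<close>

definition vecs :: "nat \<Rightarrow> bool list set" where
  "vecs n = {v. length v = n}"

definition zerov :: "nat \<Rightarrow> bool list" where
  "zerov n = replicate n False"

definition is_nonzero :: "bool list \<Rightarrow> bool" where
  "is_nonzero v \<longleftrightarrow> True \<in> set v"

definition vadd :: "bool list \<Rightarrow> bool list \<Rightarrow> bool list" where
  "vadd u v = map2 (\<noteq>) u v"

definition wt :: "bool list \<Rightarrow> nat" where
  "wt v = length (filter id v)"

definition supp :: "bool list \<Rightarrow> nat set" where
  "supp v = {i. i < length v \<and> v ! i}"

definition dotp :: "bool list \<Rightarrow> bool list \<Rightarrow> bool" where
  "dotp u c = odd (length (filter id (map2 (\<and>) u c)))"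

text \<open>Code of length (length cols) generated by the k x n generator matrix
  whose columns are the vectors in cols (each of length k): codewords u G.\<close>
definition code_of_cols :: "nat \<Rightarrow> bool list list \<Rightarrow> bool list set" where
  "code_of_cols k cols = {map (dotp u) cols | u. u \<in> vecs k}"

definition lincomb :: "nat \<Rightarrow> bool list list \<Rightarrow> bool list \<Rightarrow> bool list" where
  "lincomb N rs u = fold vadd (map snd (filter fst (zip u rs))) (zerov N)"

definition code_of_rows :: "nat \<Rightarrow> bool list list \<Rightarrow> bool list set" where
  "code_of_rows N rs = lincomb N rs ` vecs (length rs)"

definition lin_code :: "bool list set \<Rightarrow> nat \<Rightarrow> nat \<Rightarrow> bool" where
  "lin_code C n k \<longleftrightarrow> C \<subseteq> vecs n \<and> zerov n \<in> C \<and>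
     (\<forall>u\<in>C. \<forall>v\<in>C. vadd u v \<in> C) \<and> card C = 2 ^ k"

definition nz_weights :: "bool list set \<Rightarrow> nat set" where
  "nz_weights C = {wt c | c. c \<in> C \<and> is_nonzero c}"

definition wmin :: "bool list set \<Rightarrow> nat" where
  "wmin C = Min (nz_weights C)"

definition wmax :: "bool list set \<Rightarrow> nat" where
  "wmax C = Max (nz_weights C)"

definition minimal_code :: "bool list set \<Rightarrow> bool" where
  "minimal_code C \<longleftrightarrow> (\<forall>c\<in>C. \<forall>c'\<in>C. is_nonzero c \<and> is_nonzero c' \<and>
      supp c \<subseteq> supp c' \<longrightarrow> c = c')"

definition ashikhmin_barg :: "bool list set \<Rightarrow> bool" where
  "ashikhmin_barg C \<longleftrightarrow> real (wmin C) / real (wmax C) > 1 / 2"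

definition projective_cols :: "nat \<Rightarrow> bool list list \<Rightarrow> bool" where
  "projective_cols k cols \<longleftrightarrow> (\<forall>c\<in>set cols. length c = k \<and> is_nonzero c) \<and> distinct cols"

definition simplex_compl_cols :: "nat \<Rightarrow> nat \<Rightarrow> bool list list \<Rightarrow> bool list list \<Rightarrow> bool" where
  "simplex_compl_cols k h cols cols1 \<longleftrightarrow> distinct cols1 \<and>
     set cols1 = {v \<in> vecs (k + h). is_nonzero v} - (\<lambda>c. c @ replicate h False) ` set cols"

definition ext_basis :: "nat \<Rightarrow> nat \<Rightarrow> bool list set \<Rightarrow> bool list list \<Rightarrow> bool" where
  "ext_basis N K D rs \<longleftrightarrow> length rs = K \<and> (\<forall>r\<in>set rs. length r = N) \<and>
     inj_on (lincomb N rs) (vecs K) \<and> code_of_rows N rs = D \<and>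
     wt (rs ! 0) = wmax D \<and> wt (rs ! 1) = wmin D"

definition ext_code :: "nat \<Rightarrow> bool list set \<Rightarrow> bool list list \<Rightarrow> bool list set" where
  "ext_code N D rs = (let n' = 2 * wmin D - wmax D in
     code_of_rows (n' + N)
       ((replicate n' True @ rs ! 0) # map (\<lambda>r. replicate n' False @ r) (tl rs)))"

end

theory Submission
  imports Defs
begin

text \<open>Write \<open>K = 2m+h-2\<close>. A nonzero message \<open>u\<close> pairs oddly with exactly half of
  the vectors of length \<open>K\<close>, so its codeword in the simplex complementary code \<open>C\<^sub>1\<close>
  has weight \<open>2^(K-1)\<close> minus the weight of the \<open>C\<^sub>0\<close>-codeword of its first \<open>2m-2\<close>
  coordinates. Hence the nonzero weights of \<open>C\<^sub>1\<close> lie between \<open>w = 2^(K-1) - wmax C\<^sub>0\<close>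
  and \<open>W = 2^(K-1)\<close>, both attained, and \<open>W < 2w\<close>.

  In the extended code a nonzero codeword has weight \<open>n' + wt r\<close> or \<open>wt r\<close> for a nonzero
  \<open>r \<in> C\<^sub>1\<close>, according to the first message bit, so its weights range from \<open>w\<close> to
  \<open>n' + W = 2w\<close>: the ratio is exactly \<open>1/2\<close>. If \<open>supp c \<subset> supp c'\<close>, then
  \<open>wt c' = wt c + wt (c + c')\<close>, and in each of the four cases for the first message bits of
  \<open>c\<close> and \<open>c'\<close> the right-hand side exceeds the bound for \<open>wt c'\<close>, because \<open>n' \<ge> 1\<close> and
  \<open>W < 2w\<close>; so the extended code is minimal.\<close>

lemma in_vecs_iff: "v \<in> vecs n \<longleftrightarrow> length v = n"
  by (simp add: vecs_def)

lemma finite_vecs [simp]: "finite (vecs n)"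
  unfolding vecs_def using finite_lists_length_eq[of "UNIV :: bool set" n] by simp

lemma card_vecs: "card (vecs n) = 2 ^ n"
  unfolding vecs_def using card_lists_length_eq[of "UNIV :: bool set" n] by simp

lemma length_zerov [simp]: "length (zerov n) = n"
  by (simp add: zerov_def)

lemma is_nonzero_iff_neq_zerov: "is_nonzero v \<longleftrightarrow> v \<noteq> zerov (length v)"
  unfolding is_nonzero_def zerov_def by (induction v) auto

lemma length_vadd [simp]: "length (vadd u v) = min (length u) (length v)"
  by (simp add: vadd_def)

lemma nth_vadd [simp]: "i < length u \<Longrightarrow> i < length v \<Longrightarrow> vadd u v ! i = (u ! i \<noteq> v ! i)"
  by (simp add: vadd_def)

lemma vadd_Cons [simp]: "vadd (x # u) (y # v) = (x \<noteq> y) # vadd u v"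
  by (simp add: vadd_def)

lemma vadd_Nil [simp]: "vadd [] v = []" "vadd u [] = []"
  by (simp_all add: vadd_def)

lemma vadd_append: "length p = length p' \<Longrightarrow> vadd (p @ q) (p' @ q') = vadd p p' @ vadd q q'"
  by (simp add: vadd_def)

lemma vadd_replicate: "vadd (replicate n a) (replicate n b) = replicate n (a \<noteq> b)"
  by (intro nth_equalityI) auto

lemma vadd_zerov_right: "length v = n \<Longrightarrow> vadd v (zerov n) = v"
  by (intro nth_equalityI) (auto simp: zerov_def)

lemma vadd_self: "vadd v v = zerov (length v)"
  by (intro nth_equalityI) (auto simp: zerov_def)

lemma vadd_eq_zerov_iff: "length u = length v \<Longrightarrow> vadd u v = zerov (length u) \<longleftrightarrow> u = v"
  by (auto simp: vadd_self list_eq_iff_nth_eq zerov_def)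

lemma hd_vadd: "u \<noteq> [] \<Longrightarrow> v \<noteq> [] \<Longrightarrow> hd (vadd u v) = (hd u \<noteq> hd v)"
  by (cases u; cases v) auto

lemma dotp_Nil [simp]: "dotp [] c = False" "dotp u [] = False"
  by (simp_all add: dotp_def)

lemma dotp_Cons [simp]: "dotp (x # u) (y # c) = ((x \<and> y) \<noteq> dotp u c)"
  by (cases x; cases y) (simp_all add: dotp_def)

lemma dotp_vadd_left: "length u = length v \<Longrightarrow> dotp (vadd u v) c = (dotp u c \<noteq> dotp v c)"
proof (induction u arbitrary: v c)
  case (Cons x u)
  then show ?case by (cases v; cases c) auto
qed simp

lemma dotp_imp_nonzero: "dotp u c \<Longrightarrow> is_nonzero u \<and> is_nonzero c"
proof (induction u arbitrary: c)
  case (Cons x u)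
  then show ?case by (cases c) (auto simp: is_nonzero_def)
qed simp

lemma dotp_append_replicate_False: "dotp u (g @ replicate h False) = dotp (take (length g) u) g"
proof (induction g arbitrary: u)
  case Nil
  then show ?case by (auto simp: is_nonzero_def dest: dotp_imp_nonzero)
next
  case (Cons x g)
  then show ?case by (cases u) auto
qed

lemma card_vecs_Suc:
  "card {v \<in> vecs (Suc n). P v} = card {c \<in> vecs n. P (True # c)} + card {c \<in> vecs n. P (False # c)}"
proof -
  have split: "{v \<in> vecs (Suc n). P v} =
      Cons True ` {c \<in> vecs n. P (True # c)} \<union> Cons False ` {c \<in> vecs n. P (False # c)}"
    by (auto simp: in_vecs_iff length_Suc_conv image_iff; metis (full_types))
  show ?thesis
    unfolding split by (subst card_Un_disjoint) (auto simp: card_image)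
qed

lemma card_vecs_not: "card {c \<in> vecs n. \<not> P c} = 2 ^ n - card {c \<in> vecs n. P c}"
proof -
  have "{c \<in> vecs n. \<not> P c} = vecs n - {c \<in> vecs n. P c}"
    by auto
  then show ?thesis
    by (simp add: card_Diff_subset card_vecs)
qed

lemma card_dotp: "length u = n \<Longrightarrow> is_nonzero u \<Longrightarrow> card {c \<in> vecs n. dotp u c} = 2 ^ (n - 1)"
proof (induction u arbitrary: n)
  case Nil
  then show ?case by (simp add: is_nonzero_def)
next
  case (Cons x u)
  then obtain n' where n: "n = Suc n'" "length u = n'"
    by auto
  have split: "card {c \<in> vecs n. dotp (x # u) c} =
      card {c \<in> vecs n'. x \<noteq> dotp u c} + card {c \<in> vecs n'. dotp u c}"
    using card_vecs_Suc[of n' "dotp (x # u)"] n by simp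
  show ?case
  proof (cases "is_nonzero u")
    case True
    then have half: "card {c \<in> vecs n'. dotp u c} = 2 ^ (n' - 1)" and "n' \<noteq> 0"
      using Cons n by (auto simp: is_nonzero_def)
    then have double: "(2::nat) ^ n' = 2 * 2 ^ (n' - 1)"
      by (cases n') auto
    have "card {c \<in> vecs n'. x \<noteq> dotp u c} = 2 ^ (n' - 1)"
      using half double card_vecs_not[of n' "dotp u"] by (cases x) simp_all
    then show ?thesis
      using split half double n by simp
  next
    case False
    then have "x" and "\<And>c. \<not> dotp u c"
      using Cons.prems dotp_imp_nonzero by (auto simp: is_nonzero_def)
    then show ?thesis
      using split n by (simp add: card_vecs)
  qed
qed

lemma wt_append [simp]: "wt (p @ q) = wt p + wt q"
  by (simp add: wt_def)

lemma wt_replicate: "wt (replicate n a) = (if a then n else 0)"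
  by (simp add: wt_def)

lemma wt_zerov [simp]: "wt (zerov n) = 0"
  by (simp add: wt_def zerov_def)

lemma wt_pos_iff: "0 < wt v \<longleftrightarrow> is_nonzero v"
  by (auto simp: wt_def is_nonzero_def filter_empty_conv)

lemma wt_map_distinct: "distinct xs \<Longrightarrow> wt (map f xs) = card {x \<in> set xs. f x}"
  by (simp add: wt_def filter_map comp_def distinct_card[symmetric])

lemma wt_eq_wt_add_wt_vadd:
  assumes "length c = length c'" "supp c \<subseteq> supp c'"
  shows "wt c' = wt c + wt (vadd c c')"
proof -
  have "\<forall>i < length c. c ! i \<longrightarrow> c' ! i"
    using assms by (auto simp: supp_def)
  with assms(1) show ?thesis
  proof (induction c c' rule: list_induct2)
    case (Cons x xs y ys)
    then have "wt ys = wt xs + wt (vadd xs ys)" and "x \<longrightarrow> y"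
      by force+
    then show ?case
      by (cases x; cases y) (auto simp: wt_def)
  qed (simp add: wt_def)
qed

lemma nz_weights_eq_image: "nz_weights C = wt ` {c \<in> C. is_nonzero c}"
  by (auto simp: nz_weights_def)

lemma wmin_le_wt_le_wmax:
  assumes "finite C" "c \<in> C" "is_nonzero c"
  shows "wmin C \<le> wt c \<and> wt c \<le> wmax C"
proof -
  have "finite (nz_weights C)" "wt c \<in> nz_weights C"
    using assms by (auto simp: nz_weights_eq_image)
  then show ?thesis
    by (simp add: wmin_def wmax_def)
qed

lemma wmin_wmax_eqI:
  assumes "finite C"
    and "\<And>c. c \<in> C \<Longrightarrow> is_nonzero c \<Longrightarrow> lo \<le> wt c \<and> wt c \<le> hi"
    and "a \<in> C" "is_nonzero a" "wt a = lo"
    and "b \<in> C" "is_nonzero b" "wt b = hi"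
  shows "wmin C = lo \<and> wmax C = hi"
proof -
  have "finite (nz_weights C)" "lo \<in> nz_weights C" "hi \<in> nz_weights C"
    and "\<forall>w \<in> nz_weights C. lo \<le> w \<and> w \<le> hi"
    using assms by (auto simp: nz_weights_eq_image)
  then show ?thesis
    unfolding wmin_def wmax_def by (meson Max_eqI Min_eqI)
qed

lemma lin_code_image:
  assumes len: "\<And>u. u \<in> vecs k \<Longrightarrow> length (f u) = n"
    and add: "\<And>u v. u \<in> vecs k \<Longrightarrow> v \<in> vecs k \<Longrightarrow> f (vadd u v) = vadd (f u) (f v)"
    and nonzero: "\<And>u. u \<in> vecs k \<Longrightarrow> u \<noteq> zerov k \<Longrightarrow> is_nonzero (f u)"
  shows "lin_code (f ` vecs k) n k"
proof -
  have vadd_vecs: "vadd u v \<in> vecs k" if "u \<in> vecs k" "v \<in> vecs k" for u v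
    using that by (simp add: in_vecs_iff)
  have zero_vecs: "zerov k \<in> vecs k"
    by (simp add: in_vecs_iff)
  have "f (zerov k) = vadd (f (zerov k)) (f (zerov k))"
    using add[OF zero_vecs zero_vecs] vadd_self[of "zerov k"] by simp
  then have zero: "f (zerov k) = zerov n"
    using vadd_self len[OF zero_vecs] by simp
  have inj: "inj_on f (vecs k)"
  proof (rule inj_onI)
    fix u v assume u: "u \<in> vecs k" and v: "v \<in> vecs k" and "f u = f v"
    then have "f (vadd u v) = zerov (length (f u))"
      using add vadd_self by metis
    then have "vadd u v = zerov k"
      using nonzero[OF vadd_vecs[OF u v]] len[OF vadd_vecs[OF u v]] len[OF u]
      by (auto simp: is_nonzero_iff_neq_zerov)
    then show "u = v"
      using u v vadd_eq_zerov_iff[of u v] by (simp add: in_vecs_iff)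
  qed
  show ?thesis
    unfolding lin_code_def
  proof (intro conjI ballI)
    show "f ` vecs k \<subseteq> vecs n"
      using len by (auto simp: in_vecs_iff)
    show "zerov n \<in> f ` vecs k"
      using zero zero_vecs by (metis image_eqI)
    show "vadd a b \<in> f ` vecs k" if ab: "a \<in> f ` vecs k" "b \<in> f ` vecs k" for a b
    proof -
      obtain u v where "u \<in> vecs k" "v \<in> vecs k" "a = f u" "b = f v"
        using ab by blast
      then show ?thesis
        using add vadd_vecs by (metis image_eqI)
    qed
    show "card (f ` vecs k) = 2 ^ k"
      using inj by (simp add: card_image card_vecs)
  qed
qed

definition encode :: "bool list list \<Rightarrow> bool list \<Rightarrow> bool list" where
  "encode G u = map (dotp u) G"

lemma code_of_cols_eq_image: "code_of_cols k G = encode G ` vecs k"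
  by (auto simp: code_of_cols_def encode_def)

lemma length_encode [simp]: "length (encode G u) = length G"
  by (simp add: encode_def)

lemma encode_zerov: "encode G (zerov k) = zerov (length G)"
  by (simp add: encode_def zerov_def list_eq_iff_nth_eq)
    (metis dotp_imp_nonzero is_nonzero_def in_set_replicate)

lemma is_nonzero_of_encode: "is_nonzero (encode G u) \<Longrightarrow> is_nonzero u"
  by (auto simp: encode_def is_nonzero_def dest: dotp_imp_nonzero)

lemma encode_vadd: "length u = length v \<Longrightarrow> encode G (vadd u v) = vadd (encode G u) (encode G v)"
  by (intro nth_equalityI) (auto simp: encode_def dotp_vadd_left)

lemma wt_encode_le_wmax:
  assumes "u \<in> vecs k"
  shows "wt (encode G u) \<le> wmax (code_of_cols k G)"
proof (cases "is_nonzero (encode G u)")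
  case True
  then show ?thesis
    using wmin_le_wt_le_wmax[of "code_of_cols k G"] assms by (simp add: code_of_cols_eq_image)
next
  case False
  then show ?thesis
    by (simp add: wt_pos_iff[symmetric])
qed

lemma padded_cols_subset:
  "projective_cols k G0 \<Longrightarrow>
    (\<lambda>c. c @ replicate h False) ` set G0 \<subseteq> {v \<in> vecs (k + h). is_nonzero v}"
  by (auto simp: projective_cols_def in_vecs_iff is_nonzero_def)

lemma card_padded_cols:
  "projective_cols k G0 \<Longrightarrow> card ((\<lambda>c. c @ replicate h False) ` set G0) = length G0"
  by (simp add: projective_cols_def card_image inj_on_def distinct_card)

lemma length_simplex_compl:
  assumes "projective_cols k G0" "simplex_compl_cols k h G0 G1"
  shows "length G1 = 2 ^ (k + h) - 1 - length G0"
proof -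
  have "{v \<in> vecs (k + h). is_nonzero v} = vecs (k + h) - {zerov (k + h)}"
    by (auto simp: in_vecs_iff is_nonzero_iff_neq_zerov)
  then have "card {v \<in> vecs (k + h). is_nonzero v} = 2 ^ (k + h) - 1"
    by (simp add: card_vecs in_vecs_iff)
  then show ?thesis
    using assms padded_cols_subset[OF assms(1)] card_padded_cols[OF assms(1)]
    by (simp add: simplex_compl_cols_def distinct_card[symmetric] card_Diff_subset finite_subset)
qed

lemma wt_encode_simplex_compl:
  assumes "projective_cols k G0" "simplex_compl_cols k h G0 G1"
    and "u \<in> vecs (k + h)" "is_nonzero u"
  shows "wt (encode G1 u) = 2 ^ (k + h - 1) - wt (encode G0 (take k u))"
proof -
  let ?pad = "\<lambda>c. c @ replicate h False"
  have G0: "\<forall>c \<in> set G0. length c = k" "distinct G0"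
    and G1: "distinct G1" "set G1 = {v \<in> vecs (k + h). is_nonzero v} - ?pad ` set G0"
    using assms(1,2) by (auto simp: projective_cols_def simplex_compl_cols_def)
  have "wt (encode G1 u) = card {c \<in> set G1. dotp u c}"
    by (simp add: encode_def wt_map_distinct G1)
  also have "{c \<in> set G1. dotp u c} = {c \<in> vecs (k + h). dotp u c} - {c \<in> ?pad ` set G0. dotp u c}"
    using G1(2) dotp_imp_nonzero by auto
  also have "card \<dots> = card {c \<in> vecs (k + h). dotp u c} - card {c \<in> ?pad ` set G0. dotp u c}"
    using padded_cols_subset[OF assms(1)] by (intro card_Diff_subset) auto
  also have "card {c \<in> vecs (k + h). dotp u c} = 2 ^ (k + h - 1)"
    using card_dotp[of u "k + h"] assms(3,4) by (simp add: in_vecs_iff)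
  also have "{c \<in> ?pad ` set G0. dotp u c} = ?pad ` {g \<in> set G0. dotp (take k u) g}"
    using G0 by (auto simp: dotp_append_replicate_False)
  also have "card \<dots> = wt (encode G0 (take k u))"
    by (simp add: card_image inj_on_def encode_def wt_map_distinct G0)
  finally show ?thesis .
qed

theorem simplex_compl_code:
  assumes proj: "projective_cols k G0" and compl: "simplex_compl_cols k h G0 G1" and "1 \<le> h"
    and nonempty: "nz_weights (code_of_cols k G0) \<noteq> {}"
    and small: "wmax (code_of_cols k G0) < 2 ^ (k + h - 1)"
  shows "lin_code (code_of_cols (k + h) G1) (2 ^ (k + h) - 1 - length G0) (k + h)"
    and "wmin (code_of_cols (k + h) G1) = 2 ^ (k + h - 1) - wmax (code_of_cols k G0)"
    and "wmax (code_of_cols (k + h) G1) = 2 ^ (k + h - 1)"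
proof -
  let ?C0 = "code_of_cols k G0" and ?C1 = "code_of_cols (k + h) G1"
  define X :: nat where "X = 2 ^ (k + h - 1)"
  have bounds: "X - wmax ?C0 \<le> wt (encode G1 u) \<and> wt (encode G1 u) \<le> X"
    if "u \<in> vecs (k + h)" "is_nonzero u" for u
  proof -
    have "take k u \<in> vecs k"
      using that by (simp add: in_vecs_iff)
    then show ?thesis
      using wt_encode_simplex_compl[OF proj compl that] wt_encode_le_wmax[of "take k u" k G0]
      by (simp add: X_def diff_le_mono2)
  qed
  have nonzero: "is_nonzero (encode G1 u)" if "u \<in> vecs (k + h)" "is_nonzero u" for u
    using bounds[OF that] small wt_pos_iff[of "encode G1 u"] unfolding X_def by linarith
  show "lin_code ?C1 (2 ^ (k + h) - 1 - length G0) (k + h)"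
    unfolding code_of_cols_eq_image
    using nonzero length_simplex_compl[OF proj compl]
    by (intro lin_code_image) (auto simp: encode_vadd in_vecs_iff is_nonzero_iff_neq_zerov)
  have "wmax ?C0 \<in> nz_weights ?C0"
    using nonempty unfolding wmax_def nz_weights_eq_image code_of_cols_eq_image by simp
  then obtain u0 where u0: "u0 \<in> vecs k" "is_nonzero (encode G0 u0)" "wt (encode G0 u0) = wmax ?C0"
    by (auto simp: nz_weights_eq_image code_of_cols_eq_image)
  define ua where "ua = u0 @ zerov h"
  define ub where "ub = zerov k @ True # zerov (h - 1)"
  have ua: "ua \<in> vecs (k + h)" "is_nonzero ua" "take k ua = u0"
    using u0 is_nonzero_of_encode[of G0 u0] by (auto simp: ua_def in_vecs_iff is_nonzero_def)
  have ub: "ub \<in> vecs (k + h)" "is_nonzero ub" "take k ub = zerov k"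
    using \<open>1 \<le> h\<close> by (auto simp: ub_def in_vecs_iff is_nonzero_def)
  have "wmin ?C1 = X - wmax ?C0 \<and> wmax ?C1 = X"
  proof (rule wmin_wmax_eqI)
    show "X - wmax ?C0 \<le> wt c \<and> wt c \<le> X" if "c \<in> ?C1" "is_nonzero c" for c
      using that bounds is_nonzero_of_encode by (auto simp: code_of_cols_eq_image)
    show "wt (encode G1 ua) = X - wmax ?C0"
      using wt_encode_simplex_compl[OF proj compl ua(1,2)] ua(3) u0(3) by (simp add: X_def)
    show "wt (encode G1 ub) = X"
      using wt_encode_simplex_compl[OF proj compl ub(1,2)] ub(3) by (simp add: X_def encode_zerov)
  qed (use ua ub nonzero in \<open>auto simp: code_of_cols_eq_image\<close>)
  then show "wmin ?C1 = 2 ^ (k + h - 1) - wmax ?C0" "wmax ?C1 = 2 ^ (k + h - 1)"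
    by (simp_all add: X_def)
qed

lemma length_fold_vadd:
  "\<forall>x \<in> set xs. length x = length s \<Longrightarrow> length (fold vadd xs s) = length s"
  by (induction xs arbitrary: s) auto

lemma fold_vadd_vadd:
  assumes "\<forall>x \<in> set xs. length x = length s" "length r = length s"
  shows "fold vadd xs (vadd r s) = vadd r (fold vadd xs s)"
  using assms
proof (induction xs arbitrary: s)
  case (Cons x xs)
  have "vadd x (vadd r s) = vadd r (vadd x s)"
    using Cons.prems by (intro nth_equalityI) auto
  then show ?case
    using Cons by simp
qed simp

lemma lincomb_Nil [simp]: "lincomb N [] u = zerov N" "lincomb N rs [] = zerov N"
  by (simp_all add: lincomb_def)

lemma length_lincomb: "\<forall>r \<in> set rs. length r = N \<Longrightarrow> length (lincomb N rs u) = N"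
  unfolding lincomb_def by (subst length_fold_vadd) (auto dest: set_zip_rightD)

lemma lincomb_Cons:
  assumes "length r = N" "\<forall>x \<in> set rs. length x = N"
  shows "lincomb N (r # rs) (a # u) = (if a then vadd r (lincomb N rs u) else lincomb N rs u)"
proof -
  have "\<forall>x \<in> set (map snd (filter fst (zip u rs))). length x = length (zerov N)"
    using assms(2) by (auto dest: set_zip_rightD)
  then show ?thesis
    unfolding lincomb_def using fold_vadd_vadd[of _ "zerov N" r] assms(1) by simp
qed

lemma lincomb_zerov: "lincomb N rs (zerov n) = zerov N"
proof -
  have "filter fst (zip (replicate n False) rs) = []"
    by (induction n arbitrary: rs) (auto simp: zip_Cons1 split: list.splits)
  then show ?thesis
    by (simp add: lincomb_def zerov_def)
qed

lemma lincomb_vadd: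
  assumes "\<forall>r \<in> set rs. length r = N" "length u = length rs" "length v = length rs"
  shows "lincomb N rs (vadd u v) = vadd (lincomb N rs u) (lincomb N rs v)"
  using assms
proof (induction rs arbitrary: u v)
  case Nil
  then show ?case by (simp add: vadd_self)
next
  case (Cons r rs)
  then obtain a u' b v' where uv: "u = a # u'" "v = b # v'"
    by (cases u; cases v) auto
  have rows: "\<forall>x \<in> set rs. length x = N" "length r = N"
    using Cons.prems by auto
  have "length (lincomb N rs w) = N" for w
    using rows length_lincomb by blast
  then show ?case
    using Cons rows unfolding uv vadd_Cons lincomb_Cons[OF rows(2,1)]
    by (cases a; cases b) (auto intro!: nth_equalityI)
qed

lemma lincomb_map_pad:
  assumes "\<forall>x \<in> set xs. length x = N"
  shows "lincomb (n + N) (map (\<lambda>r. replicate n False @ r) xs) u = replicate n False @ lincomb N xs u"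
  using assms
proof (induction xs arbitrary: u)
  case Nil
  then show ?case by (simp add: zerov_def replicate_add)
next
  case (Cons x xs)
  show ?case
  proof (cases u)
    case Nil
    then show ?thesis by (simp add: zerov_def replicate_add)
  next
    case (Cons a u')
    have rows: "length (replicate n False @ x) = n + N"
      "\<forall>y \<in> set (map (\<lambda>r. replicate n False @ r) xs). length y = n + N"
      using Cons.prems by auto
    show ?thesis
      unfolding Cons list.map(2) lincomb_Cons[OF rows]
      using Cons.IH Cons.prems lincomb_Cons[of x N xs]
      by (auto simp: vadd_append vadd_self zerov_def)
  qed
qed

definition ext_word :: "nat \<Rightarrow> nat \<Rightarrow> bool list list \<Rightarrow> bool list \<Rightarrow> bool list" where
  "ext_word n' N rs u = replicate n' (hd u) @ lincomb N rs u"

lemma lincomb_ext_rows: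
  assumes "\<forall>r \<in> set rs. length r = N" "rs \<noteq> []" "u \<noteq> []"
  shows "lincomb (n' + N) ((replicate n' True @ rs ! 0) # map (\<lambda>r. replicate n' False @ r) (tl rs)) u
    = ext_word n' N rs u"
proof -
  obtain r0 rs' a u' where "rs = r0 # rs'" "u = a # u'"
    using assms(2,3) by (cases rs; cases u) auto
  moreover have "vadd (replicate n' True) (replicate n' False) = replicate n' True"
    by (simp add: vadd_replicate)
  ultimately show ?thesis
    using assms(1) by (auto simp: ext_word_def lincomb_Cons lincomb_map_pad vadd_append)
qed

lemma ext_basisD:
  assumes "ext_basis N K D rs"
  shows "length rs = K" "\<forall>r \<in> set rs. length r = N" "inj_on (lincomb N rs) (vecs K)"
    "D = lincomb N rs ` vecs K" "wt (rs ! 0) = wmax D" "wt (rs ! 1) = wmin D"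
  using assms by (auto simp: ext_basis_def code_of_rows_def)

context
  fixes N K :: nat and D :: "bool list set" and rs :: "bool list list"
  assumes basis: "ext_basis N K D rs"
    and two_le_dim: "2 \<le> K"
    and wmax_less: "wmax D < 2 * wmin D"
begin

lemma ext_code_eq_image: "ext_code N D rs = ext_word (2 * wmin D - wmax D) N rs ` vecs K"
proof -
  note rows = ext_basisD[OF basis]
  have "length ((replicate n' True @ rs ! 0) # map (\<lambda>r. replicate n' False @ r) (tl rs)) = K" for n'
    using rows(1) two_le_dim by simp
  then show ?thesis
    unfolding ext_code_def Let_def code_of_rows_def
    using rows(1,2) two_le_dim
    by (intro image_cong) (auto simp: in_vecs_iff intro!: lincomb_ext_rows)
qed

lemma wt_lincomb_bounds:
  assumes "u \<in> vecs K" "u \<noteq> zerov K"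
  shows "wmin D \<le> wt (lincomb N rs u) \<and> wt (lincomb N rs u) \<le> wmax D"
proof -
  note rows = ext_basisD[OF basis]
  have "lincomb N rs u \<noteq> lincomb N rs (zerov K)"
    using inj_onD[OF rows(3)] assms by (fastforce simp: in_vecs_iff)
  then have "is_nonzero (lincomb N rs u)"
    using length_lincomb[OF rows(2)] by (simp add: lincomb_zerov is_nonzero_iff_neq_zerov)
  then show ?thesis
    using wmin_le_wt_le_wmax[of D] rows(4) assms(1) by auto
qed

lemma wt_ext_word_bounds:
  assumes "u \<in> vecs K" "u \<noteq> zerov K"
  shows "(if hd u then n' else 0) + wmin D \<le> wt (ext_word n' N rs u)"
    and "wt (ext_word n' N rs u) \<le> (if hd u then n' else 0) + wmax D"
  using wt_lincomb_bounds[OF assms] by (simp_all add: ext_word_def wt_replicate)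

lemma length_ext_word: "length (ext_word n' N rs u) = n' + N"
  using ext_basisD(2)[OF basis] by (simp add: ext_word_def length_lincomb)

lemma ext_word_vadd:
  assumes "u \<in> vecs K" "v \<in> vecs K"
  shows "ext_word n' N rs (vadd u v) = vadd (ext_word n' N rs u) (ext_word n' N rs v)"
proof -
  note rows = ext_basisD[OF basis]
  have "u \<noteq> []" "v \<noteq> []" "length u = length rs" "length v = length rs"
    using assms two_le_dim rows(1) by (auto simp: in_vecs_iff)
  then show ?thesis
    using rows(2) by (simp add: ext_word_def vadd_append vadd_replicate hd_vadd lincomb_vadd)
qed

lemma ext_word_zerov: "ext_word n' N rs (zerov K) = zerov (n' + N)"
proof -
  have "hd (zerov K) = False"
    using two_le_dim by (cases K) (simp_all add: zerov_def)
  then show ?thesis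
    by (simp add: ext_word_def lincomb_zerov) (simp add: zerov_def replicate_add)
qed

lemma nonzero_ext_word_imp_neq_zerov:
  "is_nonzero (ext_word n' N rs u) \<Longrightarrow> u \<noteq> zerov K"
  using ext_word_zerov by (auto simp: is_nonzero_def zerov_def)

theorem lin_code_ext_code: "lin_code (ext_code N D rs) (2 * wmin D - wmax D + N) K"
proof -
  have "0 < wt (ext_word n' N rs u)" if "u \<in> vecs K" "u \<noteq> zerov K" for n' u
    using wt_ext_word_bounds(1)[OF that, of n'] wmax_less by (auto split: if_splits)
  then show ?thesis
    unfolding ext_code_eq_image using two_le_dim
    by (intro lin_code_image) (auto simp: length_ext_word ext_word_vadd wt_pos_iff)
qed

theorem wmin_wmax_ext_code:
  "wmin (ext_code N D rs) = wmin D \<and> wmax (ext_code N D rs) = 2 * wmin D"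
proof -
  note rows = ext_basisD[OF basis]
  define n' where "n' = 2 * wmin D - wmax D"
  let ?f = "ext_word n' N rs"
  obtain r0 r1 rest where rs: "rs = r0 # r1 # rest"
    using rows(1) two_le_dim by (metis Suc_le_length_iff numeral_2_eq_2)
  define ua where "ua = True # zerov (K - 1)"
  define ub where "ub = False # True # zerov (K - 2)"
  have in_vecs: "ua \<in> vecs K" "ub \<in> vecs K"
    using two_le_dim by (auto simp: ua_def ub_def in_vecs_iff)
  have "?f ua = replicate n' True @ r0" "?f ub = replicate n' False @ r1"
    using rows(2) by (simp_all add: ua_def ub_def rs ext_word_def lincomb_Cons lincomb_zerov vadd_zerov_right)
  then have wt_witness: "wt (?f ua) = 2 * wmin D" "wt (?f ub) = wmin D"
    using rows(5,6) wmax_less by (simp_all add: rs wt_replicate n'_def)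
  have "wmin (?f ` vecs K) = wmin D \<and> wmax (?f ` vecs K) = 2 * wmin D"
  proof (rule wmin_wmax_eqI)
    show "wmin D \<le> wt c \<and> wt c \<le> 2 * wmin D" if c: "c \<in> ?f ` vecs K" "is_nonzero c" for c
    proof -
      obtain u where u: "u \<in> vecs K" "c = ?f u"
        using c(1) by blast
      then have u_nonzero: "u \<noteq> zerov K"
        using c(2) nonzero_ext_word_imp_neq_zerov by blast
      show ?thesis
        using wt_ext_word_bounds[OF u(1) u_nonzero, of n'] u(2) wmax_less
        by (simp add: n'_def split: if_splits)
    qed
    show "is_nonzero (?f ub)" "is_nonzero (?f ua)"
      using wt_witness wmax_less by (simp_all add: wt_pos_iff[symmetric])
  qed (use in_vecs wt_witness in auto)
  then show ?thesis
    using ext_code_eq_image two_le_dim by (simp add: n'_def)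
qed

theorem minimal_ext_code: "minimal_code (ext_code N D rs)"
proof -
  define n' where "n' = 2 * wmin D - wmax D"
  let ?f = "ext_word n' N rs"
  have "?f u = ?f v"
    if uv: "u \<in> vecs K" "v \<in> vecs K" and nonzero: "is_nonzero (?f u)" "is_nonzero (?f v)"
      and supp: "supp (?f u) \<subseteq> supp (?f v)" for u v
  proof (rule ccontr)
    assume "?f u \<noteq> ?f v"
    define w where "w = vadd u v"
    have "u \<noteq> []" "v \<noteq> []"
      using uv two_le_dim by (auto simp: in_vecs_iff)
    then have w: "w \<in> vecs K" "w \<noteq> zerov K" "hd w = (hd u \<noteq> hd v)"
      using uv \<open>?f u \<noteq> ?f v\<close> vadd_eq_zerov_iff[of u v]
      by (auto simp: w_def in_vecs_iff hd_vadd)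
    have "wt (?f v) = wt (?f u) + wt (?f w)"
      using wt_eq_wt_add_wt_vadd[OF _ supp] uv by (simp add: length_ext_word ext_word_vadd w_def)
    then show False
      using wt_ext_word_bounds[OF uv(1) nonzero_ext_word_imp_neq_zerov[OF nonzero(1)], of n']
        wt_ext_word_bounds[OF uv(2) nonzero_ext_word_imp_neq_zerov[OF nonzero(2)], of n']
        wt_ext_word_bounds[OF w(1,2), of n'] w(3) wmax_less
      by (cases "hd u"; cases "hd v") (simp_all add: n'_def)
  qed
  then show ?thesis
    unfolding minimal_code_def ext_code_eq_image using two_le_dim
    by (auto simp: n'_def)
qed

end

lemma not_ashikhmin_barg_if_wmax_eq: "wmax C = 2 * wmin C \<Longrightarrow> \<not> ashikhmin_barg C"
  by (cases "wmin C = 0") (simp_all add: ashikhmin_barg_def)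

lemma parameter_powers:
  fixes m h :: nat
  assumes "3 \<le> m" "1 \<le> h"
  shows "(2::nat) ^ (2*m-3) = 2 * 2 ^ (2*m-4)" "(2::nat) ^ (m-1) = 2 * 2 ^ (m-2)"
    "(2::nat) ^ (2*m+h-2) = 2 * 2 ^ (2*m+h-3)" "2 * 2 ^ (2*m-4) + 2 * 2 ^ (m-2) < (2::nat) ^ (2*m+h-3)"
proof -
  have exps: "2*m-3 = Suc (2*m-4)" "m-1 = Suc (m-2)" "2*m+h-2 = Suc (2*m+h-3)"
    "2*m-2 = Suc (Suc (2*m-4))"
    using assms by auto
  then show "(2::nat) ^ (2*m-3) = 2 * 2 ^ (2*m-4)" "(2::nat) ^ (m-1) = 2 * 2 ^ (m-2)"
    "(2::nat) ^ (2*m+h-2) = 2 * 2 ^ (2*m+h-3)"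
    by simp_all
  have "(2::nat) ^ (2*m-2) = 4 * 2 ^ (2*m-4)"
    using exps(4) by simp
  moreover have "(2::nat) ^ (m-1) \<le> 2 ^ (2*m-4)" "(2::nat) ^ (2*m-2) \<le> 2 ^ (2*m+h-3)"
    using assms by (simp_all add: power_increasing)
  moreover have "(2::nat) ^ (m-1) = 2 * 2 ^ (m-2)" "(0::nat) < 2 ^ (2*m-4)"
    using exps(2) by simp_all
  ultimately show "2 * 2 ^ (2*m-4) + 2 * 2 ^ (m-2) < (2::nat) ^ (2*m+h-3)"
    by linarith
qed

theorem proposition4p6:
  fixes m h :: nat and G0 G1 rs :: "bool list list"
  assumes "m \<ge> 3" and "h \<ge> 1"
    and "length G0 = 2^(2*m-3) + 2^(m-2) - 1"
    and "projective_cols (2*m-2) G0"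
    and "lin_code (code_of_cols (2*m-2) G0) (length G0) (2*m-2)"
    and "nz_weights (code_of_cols (2*m-2) G0) = {2^(2*m-4), 2^(2*m-4) + 2^(m-2)}"
    and "simplex_compl_cols (2*m-2) h G0 G1"
    and "ext_basis (length G1) (2*m+h-2) (code_of_cols (2*m+h-2) G1) rs"
  shows "lin_code (code_of_cols (2*m+h-2) G1) (2^(2*m+h-2) - 2^(2*m-3) - 2^(m-2)) (2*m+h-2)
       \<and> wmin (code_of_cols (2*m+h-2) G1) = 2^(2*m+h-3) - 2^(2*m-4) - 2^(m-2)
       \<and> wmax (code_of_cols (2*m+h-2) G1) = 2^(2*m+h-3)
       \<and> (let n' = 2^(2*m+h-3) - 2^(2*m-3) - 2^(m-1);
              C' = ext_code (length G1) (code_of_cols (2*m+h-2) G1) rs in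
          lin_code C' (2^(2*m+h-2) - 2^(2*m-3) - 2^(m-2) + n') (2*m+h-2)
          \<and> wmin C' = 2^(2*m+h-3) - 2^(2*m-4) - 2^(m-2)
          \<and> wmax C' = 2^(2*m+h-2) - 2^(2*m-3) - 2^(m-1)
          \<and> minimal_code C'
          \<and> \<not> ashikhmin_barg C')"
proof -
  let ?C0 = "code_of_cols (2*m-2) G0" and ?C1 = "code_of_cols (2*m+h-2) G1"
  obtain A B X :: nat where A: "2^(2*m-4) = A" and B: "2^(m-2) = B" and X: "2^(2*m+h-3) = X"
    by blast
  have powers: "2^(2*m-3) = 2*A" "2^(m-1) = 2*B" "2^(2*m+h-2) = 2*X" "2*A + 2*B < X" "0 < B"
    using parameter_powers[OF assms(1,2)] unfolding A B X by (simp_all add: B[symmetric])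
  have dim: "2*m+h-2 = (2*m-2) + h" "2*m+h-2-1 = 2*m+h-3" "(2*m-2) + h - 1 = 2*m+h-3"
    using assms(1) by simp_all
  have wmax_C0: "wmax ?C0 = A + B"
    using assms(6) by (simp add: wmax_def A B)
  have "nz_weights ?C0 \<noteq> {}" "wmax ?C0 < 2^((2*m-2) + h - 1)"
    using assms(6) wmax_C0 powers(4) unfolding dim(3) X by auto
  note C1 = simplex_compl_code[OF assms(4,7,2) this, folded dim(1), unfolded dim(2) X wmax_C0 powers(3)]
  have "2*X - 1 - length G0 = 2*X - 2*A - B"
    using assms(3) powers unfolding B by arith
  with C1 have C1: "lin_code ?C1 (2*X - 2*A - B) (2*m+h-2)" "wmin ?C1 = X - A - B" "wmax ?C1 = X"
    by simp_all
  have length_G1: "length G1 = 2*X - 2*A - B"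
    using length_simplex_compl[OF assms(4,7), folded dim(1)] assms(3) powers by (simp add: B)
  have "wmax ?C1 < 2 * wmin ?C1" "2 \<le> 2*m+h-2"
    using C1(2,3) powers(4) assms(1) by simp_all
  note C' = lin_code_ext_code[OF assms(8) this(2,1)] wmin_wmax_ext_code[OF assms(8) this(2,1)]
    minimal_ext_code[OF assms(8) this(2,1)]
  have "2 * wmin ?C1 - wmax ?C1 + length G1 = (2*X - 2*A - B) + (X - 2*A - 2*B)"
    "2 * wmin ?C1 = 2*X - 2*A - 2*B"
    using C1(2,3) length_G1 powers(4) by arith+
  then show ?thesis
    unfolding Let_def powers(1-3) A B X using C1 C'
    by (simp add: not_ashikhmin_barg_if_wmax_eq add.commute)
qed

end
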